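(* Let $\varphi$ be a $\mathrm{THT}_1$ formula having some equilibrium model. Then $\varphi$ has an equilibrium model which is strongly ultimately periodic and of size at most $2+2^{|\varphi|}$.
   Context: Fix a finite set $P$ of atomic propositions. THT formulas over $P$ are given by $\varphi ::= p \mid \bot \mid \varphi\vee\varphi \mid \varphi\wedge\varphi \mid \varphi\rightarrow\varphi \mid \mathsf{X}\varphi \mid \varphi\,\mathsf{U}\,\varphi \mid \varphi\,\mathsf{R}\,\varphi$, with $\neg\varphi:=\varphi\rightarrow\bot$. The modalities $\mathsf F\varphi:=\top\,\mathsf U\,\varphi$ and $\mathsf G\varphi:=\bot\,\mathsf R\,\varphi$ are also allowed. A THT interpretation is a pair $M=(H,T)$ of infinite words over $2^P$ with $H(i)\subseteq T(i)$ for all $i$; write $M(i)=(H(i),T(i))$; $M$ is total if $H=T$. Satisfaction $M,i\models\varphi$ is defined by: - $M,i\not\models\bot$; - $M,i\models p$ iff $p\in H(i)$; - $\vee$ and $\wedge$ are interpreted as usual; - $M,i\models\varphi\rightarrow\psi$ iff for both $H'\in\{H,T\}$, either $(H',T),i\not\models\varphi$ or $(H',T),i\models\psi$; - $\mathsf X,\mathsf U,\mathsf R$ have their usual LTL clauses evaluated in $M$. $M\models\varphi$ means $M,0\models\varphi$. An equilibrium model of $\varphi$ is a total $(T,T)\models\varphi$ such that $(H,T)\not\models\varphi$ for every $H$ with $H(i)\subseteq T(i)$ for all $i$ and $H\ne T$. $\mathrm{THT}_1$ is the set of THT formulas in which no temporal modality ($\mathsf X,\mathsf U,\mathsf R,\mathsf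 F,\mathsf G$) occurs within the scope of another. $|\varphi|$ is the number of distinct subformulas of $\varphi$. An interpretation $M$ is strongly ultimately periodic if there is $i\ge 0$ with $M(k)=M(i)$ for all $k\ge i$. Its size is $j+1$, where $j$ is the smallest such $i$. *)

theory Defs
  imports Main
begin

datatype 'p tht =
    Atom 'p
  | Bot
  | Or "'p tht" "'p tht"
  | And "'p tht" "'p tht"
  | Imp "'p tht" "'p tht"
  | Next "'p tht"
  | Until "'p tht" "'p tht"
  | Release "'p tht" "'p tht"

definition Neg :: "'p tht \<Rightarrow> 'p tht" where "Neg \<phi> = Imp \<phi> Bot"
definition Top :: "'p tht" where "Top = Imp Bot Bot"
definition Fin :: "'p tht \<Rightarrow> 'p tht" where "Fin \<phi> = Until Top \<phi>"
definition Glob :: "'p tht \<Rightarrow> 'p tht" where "Glob \<phi> = Release Bot \<phi>"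

type_synonym 'p trace = "nat \<Rightarrow> 'p set"

primrec sat :: "'p trace \<Rightarrow> 'p trace \<Rightarrow> nat \<Rightarrow> 'p tht \<Rightarrow> bool" where
  "sat H T i (Atom p) = (p \<in> H i)"
| "sat H T i Bot = False"
| "sat H T i (Or \<phi> \<psi>) = (sat H T i \<phi> \<or> sat H T i \<psi>)"
| "sat H T i (And \<phi> \<psi>) = (sat H T i \<phi> \<and> sat H T i \<psi>)"
| "sat H T i (Imp \<phi> \<psi>) =
     ((\<not> sat H T i \<phi> \<or> sat H T i \<psi>) \<and> (\<not> sat T T i \<phi> \<or> sat T T i \<psi>))"
| "sat H T i (Next \<phi>) = sat H T (Suc i) \<phi>"
| "sat H T i (Until \<phi> \<psi>) =
     (\<exists>j\<ge>i. sat H T j \<psi> \<and> (\<forall>k. i \<le> k \<and> k < j \<longrightarrow> sat H T k \<phi>))"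
| "sat H T i (Release \<phi> \<psi>) =
     (\<forall>j\<ge>i. sat H T j \<psi> \<or> (\<exists>k. i \<le> k \<and> k < j \<and> sat H T k \<phi>))"

definition tht_interp :: "'p trace \<Rightarrow> 'p trace \<Rightarrow> bool" where
  "tht_interp H T \<longleftrightarrow> (\<forall>i. H i \<subseteq> T i)"

definition equilibrium_model :: "'p tht \<Rightarrow> 'p trace \<Rightarrow> bool" where
  "equilibrium_model \<phi> T \<longleftrightarrow>
     sat T T 0 \<phi> \<and> (\<forall>H. tht_interp H T \<and> H \<noteq> T \<longrightarrow> \<not> sat H T 0 \<phi>)"

primrec tdepth :: "'p tht \<Rightarrow> nat" where
  "tdepth (Atom p) = 0"
| "tdepth Bot = 0"
| "tdepth (Or \<phi> \<psi>) = max (tdepth \<phi>) (tdepth \<psi>)"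
| "tdepth (And \<phi> \<psi>) = max (tdepth \<phi>) (tdepth \<psi>)"
| "tdepth (Imp \<phi> \<psi>) = max (tdepth \<phi>) (tdepth \<psi>)"
| "tdepth (Next \<phi>) = Suc (tdepth \<phi>)"
| "tdepth (Until \<phi> \<psi>) = Suc (max (tdepth \<phi>) (tdepth \<psi>))"
| "tdepth (Release \<phi> \<psi>) = Suc (max (tdepth \<phi>) (tdepth \<psi>))"

definition THT1 :: "'p tht \<Rightarrow> bool" where
  "THT1 \<phi> \<longleftrightarrow> tdepth \<phi> \<le> 1"

primrec subformulas :: "'p tht \<Rightarrow> 'p tht set" where
  "subformulas (Atom p) = {Atom p}"
| "subformulas Bot = {Bot}"
| "subformulas (Or \<phi> \<psi>) = insert (Or \<phi> \<psi>) (subformulas \<phi> \<union> subformulas \<psi>)"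
| "subformulas (And \<phi> \<psi>) = insert (And \<phi> \<psi>) (subformulas \<phi> \<union> subformulas \<psi>)"
| "subformulas (Imp \<phi> \<psi>) = insert (Imp \<phi> \<psi>) (subformulas \<phi> \<union> subformulas \<psi>)"
| "subformulas (Next \<phi>) = insert (Next \<phi>) (subformulas \<phi>)"
| "subformulas (Until \<phi> \<psi>) = insert (Until \<phi> \<psi>) (subformulas \<phi> \<union> subformulas \<psi>)"
| "subformulas (Release \<phi> \<psi>) = insert (Release \<phi> \<psi>) (subformulas \<phi> \<union> subformulas \<psi>)"

definition fsize :: "'p tht \<Rightarrow> nat" where
  "fsize \<phi> = card (subformulas \<phi>)"

definition strongly_ult_periodic :: "'p trace \<Rightarrow> 'p trace \<Rightarrow> bool" where
  "strongly_ult_periodic H T \<longleftrightarrow> (\<exists>i. \<forall>k\<ge>i. (H k, T k) = (H i, T i))"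

definition sup_size :: "'p trace \<Rightarrow> 'p trace \<Rightarrow> nat" where
  "sup_size H T = (LEAST j. \<forall>k\<ge>j. (H k, T k) = (H j, T j)) + 1"

end

theory Submission
  imports Defs "HOL-Library.Infinite_Set"
begin

text \<open>
  Intersecting a trace with the atoms of \<open>\<phi>\<close> preserves equilibrium models and leaves at most
  \<open>2 ^ |\<phi>|\<close> distinct states. For a formula without nested modalities, truth at position 0
  depends only on the states at positions 0 and 1 and, through the depth-0 arguments of
  \<open>U\<close> and \<open>R\<close>, on which states occur before which. Hence passing to a subsequence of positions
  that contains 0 and 1 and, for every position, an earlier-or-equal position carrying the same
  state preserves satisfaction for every \<open>H\<close>; since any \<open>H\<close> on the subsequence
  extends back along this retraction, equilibrium is preserved too. Keeping the first occurrences
  of all states, position 1, and beyond them only positions of one state that recurs infinitely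
  often yields a trace that is constant from position \<open>1 + 2 ^ |\<phi>|\<close> on.
\<close>

definition atoms :: "'p tht \<Rightarrow> 'p set" where
  "atoms \<phi> = {p. Atom p \<in> subformulas \<phi>}"

lemma atoms_simps [simp]:
  "atoms (Atom p) = {p}" "atoms Bot = {}"
  "atoms (Or \<phi> \<psi>) = atoms \<phi> \<union> atoms \<psi>" "atoms (And \<phi> \<psi>) = atoms \<phi> \<union> atoms \<psi>"
  "atoms (Imp \<phi> \<psi>) = atoms \<phi> \<union> atoms \<psi>" "atoms (Next \<phi>) = atoms \<phi>"
  "atoms (Until \<phi> \<psi>) = atoms \<phi> \<union> atoms \<psi>" "atoms (Release \<phi> \<psi>) = atoms \<phi> \<union> atoms \<psi>"
  by (auto simp: atoms_def)

lemma finite_subformulas: "finite (subformulas \<phi>)"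
  by (induction \<phi>) auto

lemma finite_atoms: "finite (atoms \<phi>)"
  by (induction \<phi>) auto

lemma card_atoms_le_fsize: "card (atoms \<phi>) \<le> fsize \<phi>"
proof -
  have "card (atoms \<phi>) = card (Atom ` atoms \<phi>)"
    by (simp add: card_image inj_on_def)
  also have "\<dots> \<le> fsize \<phi>"
    unfolding fsize_def by (rule card_mono[OF finite_subformulas]) (auto simp: atoms_def)
  finally show ?thesis .
qed

lemma range_restrict_atoms:
  shows "finite (range (\<lambda>n. T n \<inter> atoms \<phi>))"
    and "card (range (\<lambda>n. T n \<inter> atoms \<phi>)) \<le> 2 ^ fsize \<phi>"
proof -
  have sub: "range (\<lambda>n. T n \<inter> atoms \<phi>) \<subseteq> Pow (atoms \<phi>)" by auto
  then show "finite (range (\<lambda>n. T n \<inter> atoms \<phi>))"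
    by (rule finite_subset) (simp add: finite_atoms)
  have "card (range (\<lambda>n. T n \<inter> atoms \<phi>)) \<le> card (Pow (atoms \<phi>))"
    using sub by (rule card_mono[rotated]) (simp add: finite_atoms)
  also have "\<dots> = 2 ^ card (atoms \<phi>)"
    using finite_atoms by (rule card_Pow)
  also have "\<dots> \<le> 2 ^ fsize \<phi>"
    using card_atoms_le_fsize by (rule power_increasing) simp
  finally show "card (range (\<lambda>n. T n \<inter> atoms \<phi>)) \<le> 2 ^ fsize \<phi>" .
qed

lemma sat_cong_atoms:
  "(\<And>p j. p \<in> atoms \<phi> \<Longrightarrow> p \<in> H j \<longleftrightarrow> p \<in> H' j)
   \<Longrightarrow> (\<And>p j. p \<in> atoms \<phi> \<Longrightarrow> p \<in> T j \<longleftrightarrow> p \<in> T' j)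
   \<Longrightarrow> sat H T i \<phi> = sat H' T' i \<phi>"
proof (induction \<phi> arbitrary: H H' i)
  case (Imp \<phi> \<psi>)
  have "sat H T i \<phi> = sat H' T' i \<phi>" "sat T T i \<phi> = sat T' T' i \<phi>"
       "sat H T i \<psi> = sat H' T' i \<psi>" "sat T T i \<psi> = sat T' T' i \<psi>"
    by (simp_all add: Imp.IH Imp.prems)
  then show ?case by simp
qed simp_all

lemma equilibrium_model_restrict_atoms:
  assumes eq: "equilibrium_model \<phi> T"
  shows "equilibrium_model \<phi> (\<lambda>n. T n \<inter> atoms \<phi>)" (is "equilibrium_model \<phi> ?T")
  unfolding equilibrium_model_def
proof (intro conjI allI impI)
  show "sat ?T ?T 0 \<phi>"
    using eq sat_cong_atoms[of \<phi> ?T T ?T T] by (simp add: equilibrium_model_def)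
  fix H assume H: "tht_interp H ?T \<and> H \<noteq> ?T"
  define H' where "H' n = H n \<union> (T n - atoms \<phi>)" for n
  have "tht_interp H' T"
    using H by (auto simp: tht_interp_def H'_def)
  moreover have "H' \<noteq> T"
  proof
    assume "H' = T"
    then have "H n \<union> (T n - atoms \<phi>) = T n" for n
      by (metis H'_def)
    then have "H n = ?T n" for n
      using H by (auto simp: tht_interp_def)
    with H show False by blast
  qed
  ultimately have "\<not> sat H' T 0 \<phi>"
    using eq by (simp add: equilibrium_model_def)
  moreover have "sat H' T 0 \<phi> = sat H ?T 0 \<phi>"
    using H by (intro sat_cong_atoms) (auto simp: tht_interp_def H'_def)
  ultimately show "\<not> sat H ?T 0 \<phi>" by simp
qed

lemma sat_depth0_cong:
  "tdepth \<psi> = 0 \<Longrightarrow> H i = H' j \<Longrightarrow> T i = T' j \<Longrightarrow> sat H T i \<psi> = sat H' T' j \<psi>"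
  by (induction \<psi> arbitrary: H H') auto

lemma sat_depth0_reindex:
  "tdepth \<psi> = 0 \<Longrightarrow> sat (\<lambda>n. H (f n)) (\<lambda>n. T (f n)) i \<psi> = sat H T (f i) \<psi>"
  by (rule sat_depth0_cong) auto

definition samples_every_state :: "(nat \<Rightarrow> nat) \<Rightarrow> (nat \<Rightarrow> 'a) \<Rightarrow> bool" where
  "samples_every_state f s \<longleftrightarrow> (\<forall>n. \<exists>i. f i \<le> n \<and> s (f i) = s n)"

lemma samples_every_state_comp:
  "samples_every_state f s \<Longrightarrow> samples_every_state f (g \<circ> s)"
  unfolding samples_every_state_def by (metis comp_apply)

lemma samples_every_state_depth0:
  assumes "samples_every_state f (\<lambda>n. (H n, T n))"
  shows "\<exists>i. f i \<le> n \<and> (\<forall>\<psi>. tdepth \<psi> = 0 \<longrightarrow> sat H T (f i) \<psi> = sat H T n \<psi>)"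
proof -
  obtain i where "f i \<le> n" "H (f i) = H n" "T (f i) = T n"
    using assms unfolding samples_every_state_def by blast
  then show ?thesis using sat_depth0_cong[of _ H "f i" H n T T] by metis
qed

lemma samples_every_state_retraction:
  assumes f: "strict_mono f" and samp: "samples_every_state f s"
  obtains g where "\<And>i. g (f i) = i" "\<And>n. f (g n) \<le> n" "\<And>n. s (f (g n)) = s n"
proof -
  obtain g0 where g0: "\<And>n. f (g0 n) \<le> n \<and> s (f (g0 n)) = s n"
    using samp unfolding samples_every_state_def by metis
  define g where "g n = (if n \<in> range f then inv f n else g0 n)" for n
  have "inj f" using f by (rule strict_mono_imp_inj_on)
  then have "g (f i) = i" for i by (simp add: g_def)
  moreover have "f (g n) \<le> n \<and> s (f (g n)) = s n" for n
    using g0 by (cases "n \<in> range f") (auto simp: g_def f_inv_into_f)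
  ultimately show thesis using that by blast
qed

lemma until_sampling:
  fixes f :: "nat \<Rightarrow> nat"
  assumes f: "strict_mono f"
    and early: "\<And>n. \<exists>i. f i \<le> n \<and> P (f i) = P n \<and> Q (f i) = Q n"
  shows "(\<exists>j. Q j \<and> (\<forall>k<j. P k)) \<longleftrightarrow> (\<exists>i. Q (f i) \<and> (\<forall>k<i. P (f k)))"
proof
  assume "\<exists>j. Q j \<and> (\<forall>k<j. P k)"
  then obtain j where j: "Q j" "\<forall>k<j. P k" by blast
  obtain i where i: "f i \<le> j" "Q (f i) = Q j" using early by blast
  have "P (f k)" if "k < i" for k
    using j(2) i(1) strict_monoD[OF f that] by simp
  then show "\<exists>i. Q (f i) \<and> (\<forall>k<i. P (f k))" using i j(1) by blast
next
  assume "\<exists>i. Q (f i) \<and> (\<forall>k<i. P (f k))"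
  then obtain i where i: "Q (f i)" "\<forall>k<i. P (f k)" by blast
  have "P k" if "k < f i" for k
  proof -
    obtain m where m: "f m \<le> k" "P (f m) = P k" using early by blast
    then have "f m < f i" using that by simp
    then have "m < i" using strict_mono_less[OF f] by blast
    then show ?thesis using i(2) m(2) by simp
  qed
  then show "\<exists>j. Q j \<and> (\<forall>k<j. P k)" using i(1) by blast
qed

lemma release_sampling:
  fixes f :: "nat \<Rightarrow> nat"
  assumes f: "strict_mono f"
    and early: "\<And>n. \<exists>i. f i \<le> n \<and> P (f i) = P n \<and> Q (f i) = Q n"
  shows "(\<forall>j. Q j \<or> (\<exists>k<j. P k)) \<longleftrightarrow> (\<forall>i. Q (f i) \<or> (\<exists>k<i. P (f k)))"
  using until_sampling[OF f, of "\<lambda>n. \<not> P n" "\<lambda>n. \<not> Q n"] early by auto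

lemma sat_sampling:
  assumes f: "strict_mono f" "f 0 = 0" "f 1 = 1"
  shows "tdepth \<phi> \<le> 1 \<Longrightarrow> samples_every_state f (\<lambda>n. (H n, T n))
    \<Longrightarrow> sat (\<lambda>n. H (f n)) (\<lambda>n. T (f n)) 0 \<phi> = sat H T 0 \<phi>"
proof (induction \<phi> arbitrary: H T)
  case (Imp \<phi> \<psi>)
  have "samples_every_state f (\<lambda>n. (T n, T n))"
    using samples_every_state_comp[OF Imp.prems(2), of "\<lambda>(h, t). (t, t)"]
    by (simp add: comp_def)
  with Imp show ?case by simp
next
  case (Next \<phi>)
  then show ?case using f(3) by (simp add: sat_depth0_reindex)
next
  case (Until \<phi> \<psi>)
  then have depth: "tdepth \<phi> = 0" "tdepth \<psi> = 0" by auto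
  have "\<exists>i. f i \<le> n \<and> sat H T (f i) \<phi> = sat H T n \<phi> \<and> sat H T (f i) \<psi> = sat H T n \<psi>" for n
    using samples_every_state_depth0[OF Until.prems(2)] depth by blast
  from until_sampling[OF f(1) this] show ?case
    using depth by (simp add: sat_depth0_reindex)
next
  case (Release \<phi> \<psi>)
  then have depth: "tdepth \<phi> = 0" "tdepth \<psi> = 0" by auto
  have "\<exists>i. f i \<le> n \<and> sat H T (f i) \<phi> = sat H T n \<phi> \<and> sat H T (f i) \<psi> = sat H T n \<psi>" for n
    using samples_every_state_depth0[OF Release.prems(2)] depth by blast
  from release_sampling[OF f(1) this] show ?case
    using depth by (simp add: sat_depth0_reindex)
qed (simp_all add: f(2))

lemma equilibrium_model_sampling:
  assumes eq: "equilibrium_model \<phi> T" and depth: "tdepth \<phi> \<le> 1"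
    and f: "strict_mono f" "f 0 = 0" "f 1 = 1" and samp: "samples_every_state f T"
  shows "equilibrium_model \<phi> (\<lambda>n. T (f n))"
  unfolding equilibrium_model_def
proof (intro conjI allI impI)
  have "samples_every_state f (\<lambda>n. (T n, T n))"
    using samples_every_state_comp[OF samp, of "\<lambda>t. (t, t)"] by (simp add: comp_def)
  then show "sat (\<lambda>n. T (f n)) (\<lambda>n. T (f n)) 0 \<phi>"
    using eq sat_sampling[OF f depth] by (simp add: equilibrium_model_def)
  fix H' assume H': "tht_interp H' (\<lambda>n. T (f n)) \<and> H' \<noteq> (\<lambda>n. T (f n))"
  obtain g where g: "\<And>i. g (f i) = i" "\<And>n. f (g n) \<le> n" "\<And>n. T (f (g n)) = T n"
    using samples_every_state_retraction[OF f(1) samp] by blast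
  define H where "H n = H' (g n)" for n
  have H_sampled: "(\<lambda>n. H (f n)) = H'"
    by (simp add: H_def g(1))
  have "tht_interp H T"
    using H' g(3) by (auto simp: tht_interp_def H_def)
  moreover have "H \<noteq> T"
    using H' H_sampled by auto
  ultimately have "\<not> sat H T 0 \<phi>"
    using eq by (simp add: equilibrium_model_def)
  moreover have "samples_every_state f (\<lambda>n. (H n, T n))"
    unfolding samples_every_state_def H_def using g by metis
  ultimately show "\<not> sat H' (\<lambda>n. T (f n)) 0 \<phi>"
    using sat_sampling[OF f depth] H_sampled by metis
qed

definition first_occurrences :: "(nat \<Rightarrow> 'a) \<Rightarrow> nat set" where
  "first_occurrences s = {n. \<forall>m<n. s m \<noteq> s n}"

lemma first_occurrence_le: "\<exists>m\<in>first_occurrences s. m \<le> n \<and> s m = s n"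
proof -
  define m where "m = (LEAST m. s m = s n)"
  have "s m = s n" "m \<le> n"
    unfolding m_def by (auto intro: LeastI Least_le)
  moreover have "m \<in> first_occurrences s"
    using \<open>s m = s n\<close> not_less_Least by (fastforce simp: first_occurrences_def m_def)
  ultimately show ?thesis by blast
qed

lemma bij_betw_first_occurrences: "bij_betw s (first_occurrences s) (range s)"
proof (rule bij_betw_imageI)
  show "inj_on s (first_occurrences s)"
  proof (rule inj_onI)
    fix x y assume "x \<in> first_occurrences s" "y \<in> first_occurrences s" "s x = s y"
    then show "x = y"
      unfolding first_occurrences_def by (cases x y rule: linorder_cases) auto
  qed
  have "s n \<in> s ` first_occurrences s" for n
    using first_occurrence_le[of s n] by (metis image_eqI)
  then show "s ` first_occurrences s = range s" by blast
qed

lemma samples_every_state_enumerate: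
  assumes "infinite R" "first_occurrences s \<subseteq> R"
  shows "samples_every_state (enumerate R) s"
  unfolding samples_every_state_def
proof
  fix n
  obtain m where m: "m \<in> first_occurrences s" "m \<le> n" "s m = s n"
    using first_occurrence_le by blast
  then have "m \<in> range (enumerate R)"
    using assms range_enumerate by blast
  with m show "\<exists>i. enumerate R i \<le> n \<and> s (enumerate R i) = s n" by auto
qed

lemma strict_mono_exceeds_finite_prefix:
  fixes f :: "nat \<Rightarrow> nat"
  assumes f: "strict_mono f" and F: "finite F" "range f \<inter> {..<N} \<subseteq> F" and k: "card F \<le> k"
  shows "N \<le> f k"
proof (rule ccontr)
  assume "\<not> N \<le> f k"
  moreover have "f j \<le> f k" if "j \<le> k" for j
    using that strict_mono_less_eq[OF f] by blast
  ultimately have "f ` {..k} \<subseteq> range f \<inter> {..<N}"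
    by fastforce
  then have "f ` {..k} \<subseteq> F"
    using F(2) by blast
  then have "card (f ` {..k}) \<le> card F"
    using F(1) by (rule card_mono[rotated])
  moreover have "card (f ` {..k}) = Suc k"
    using strict_mono_imp_inj_on[OF f] by (simp add: card_image inj_on_subset)
  ultimately show False using k by simp
qed

lemma finite_range_sampling:
  fixes s :: "nat \<Rightarrow> 'a"
  assumes fin: "finite (range s)"
  obtains f where "strict_mono f" "f 0 = 0" "f 1 = 1" "samples_every_state f s"
    and "\<And>k. Suc (card (range s)) \<le> k \<Longrightarrow> s (f k) = s (f (Suc (card (range s))))"
proof -
  let ?G = "first_occurrences s"
  have G: "finite ?G" "card ?G = card (range s)"
    using bij_betw_first_occurrences[of s] fin bij_betw_finite bij_betw_same_card by blast+
  obtain c where c: "infinite (s -` {c})"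
    using inf_img_fin_domE[OF fin] by blast
  define F where "F = insert 1 ?G"
  define N where "N = Suc (Max F)"
  define R where "R = F \<union> {n. N \<le> n \<and> s n = c}"
  define f where "f = enumerate R"
  have "s -` {c} - {..<N} \<subseteq> R"
    by (auto simp: R_def)
  then have R: "infinite R"
    using c by (meson finite_lessThan finite_subset Diff_infinite_finite)
  then have f: "strict_mono f" "range f = R"
    unfolding f_def by (rule strict_mono_enumerate, rule range_enumerate)
  have "0 \<in> R" "1 \<in> R"
    by (auto simp: R_def F_def first_occurrences_def)
  then have "(LEAST n. n \<in> R) = 0" "(LEAST n. n \<in> R - {0}) = 1"
    by (auto intro!: Least_equality)
  then have f01: "f 0 = 0" "f 1 = 1"
    by (simp_all add: f_def enumerate_0 enumerate_Suc)
  have "samples_every_state f s"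
    unfolding f_def by (rule samples_every_state_enumerate[OF R]) (auto simp: R_def F_def)
  have "card F \<le> Suc (card (range s))"
    using G by (simp add: F_def card_insert_if)
  moreover have "range f \<inter> {..<N} \<subseteq> F"
    using f(2) by (auto simp: R_def)
  moreover have "finite F" "\<And>n. n \<in> F \<Longrightarrow> n < N"
    using G(1) by (auto simp: F_def N_def le_imp_less_Suc)
  ultimately have "s (f k) = c" if "Suc (card (range s)) \<le> k" for k
    using strict_mono_exceeds_finite_prefix[OF f(1), of F N k] that f(2)
    by (fastforce simp: R_def)
  then show thesis
    using that f(1) f01 \<open>samples_every_state f s\<close> by simp
qed

lemma eventually_constant_sup_size:
  assumes "\<And>k. j \<le> k \<Longrightarrow> T k = T j"
  shows "strongly_ult_periodic T T" and "sup_size T T \<le> Suc j"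
proof -
  have stable: "\<forall>k\<ge>j. (T k, T k) = (T j, T j)"
    using assms by metis
  then show "strongly_ult_periodic T T"
    unfolding strongly_ult_periodic_def by blast
  have "(LEAST i. \<forall>k\<ge>i. (T k, T k) = (T i, T i)) \<le> j"
    by (rule Least_le) (fact stable)
  then show "sup_size T T \<le> Suc j"
    by (simp add: sup_size_def)
qed

theorem mainTheorem4:
  fixes \<phi> :: "'p::finite tht"
  assumes "THT1 \<phi>"
    and "\<exists>T. equilibrium_model \<phi> T"
  shows "\<exists>T. equilibrium_model \<phi> T \<and> strongly_ult_periodic T T
             \<and> sup_size T T \<le> 2 + 2 ^ fsize \<phi>"
proof -
  obtain T0 where "equilibrium_model \<phi> T0" using assms(2) by blast
  define T where "T n = T0 n \<inter> atoms \<phi>" for n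
  have eq: "equilibrium_model \<phi> T"
    unfolding T_def by (rule equilibrium_model_restrict_atoms) fact
  have fin: "finite (range T)" and card: "card (range T) \<le> 2 ^ fsize \<phi>"
    unfolding T_def by (rule range_restrict_atoms)+
  obtain f where f: "strict_mono f" "f 0 = 0" "f 1 = 1" "samples_every_state f T"
    and tail: "\<And>k. Suc (card (range T)) \<le> k \<Longrightarrow> T (f k) = T (f (Suc (card (range T))))"
    using finite_range_sampling[OF fin] by blast
  have "equilibrium_model \<phi> (\<lambda>n. T (f n))"
    using equilibrium_model_sampling[OF eq _ f] assms(1) by (simp add: THT1_def)
  moreover note eventually_constant_sup_size[of "Suc (card (range T))" "\<lambda>n. T (f n)", OF tail]
  ultimately show ?thesis
    using card by fastforce
qed

end
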